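(* Let $L$ be an i--lattice. If ${\rm Con}(L)$ is a chain, then ${\rm Con}_{\mathbb{I}}(L)={\rm Con}(L)$.
   Context: An i--lattice is a lattice $L$ with a unary operation $'$ such that $a''=a$ and $a\leq b$ implies $b'\leq a'$ for all $a,b\in L$. ${\rm Con}(L)$ is the lattice of lattice congruences of $L$, and ${\rm Con}_{\mathbb{I}}(L)$ is the set of lattice congruences $\theta$ that also preserve the involution, i.e. $(a,b)\in\theta$ implies $(a',b')\in\theta$. *)

theory Defs
  imports Main
begin

definition i_lattice :: "('a::lattice \<Rightarrow> 'a) \<Rightarrow> bool" where
  "i_lattice f \<longleftrightarrow> (\<forall>a. f (f a) = a) \<and> (\<forall>a b. a \<le> b \<longrightarrow> f b \<le> f a)"

definition Con :: "('a::lattice \<times> 'a) set set" where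
  "Con = {\<theta>. equiv UNIV \<theta> \<and>
      (\<forall>a b c d. (a, b) \<in> \<theta> \<and> (c, d) \<in> \<theta> \<longrightarrow>
         (sup a c, sup b d) \<in> \<theta> \<and> (inf a c, inf b d) \<in> \<theta>)}"

definition Con_I :: "('a::lattice \<Rightarrow> 'a) \<Rightarrow> ('a \<times> 'a) set set" where
  "Con_I f = {\<theta> \<in> Con. \<forall>a b. (a, b) \<in> \<theta> \<longrightarrow> (f a, f b) \<in> \<theta>}"

end

theory Submission
  imports Defs
begin

text \<open>The involution of an i-lattice is a dual lattice automorphism, so pulling a congruence
  \<open>\<theta>\<close> back along it yields a congruence \<open>\<theta>'\<close>. If \<open>Con(L)\<close> is a chain, then \<open>\<theta> \<subseteq> \<theta>'\<close> or
  \<open>\<theta>' \<subseteq> \<theta>\<close>; the first inclusion says that \<open>\<theta>\<close> preserves the involution, and the second one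
  implies the first because the involution is its own inverse.\<close>

lemma i_lattice_involutive:
  assumes "i_lattice f"
  shows "f (f a) = a"
  using assms unfolding i_lattice_def by blast

lemma i_lattice_antimono:
  assumes "i_lattice f" and "a \<le> b"
  shows "f b \<le> f a"
  using assms unfolding i_lattice_def by blast

lemma i_lattice_sup:
  assumes "i_lattice f"
  shows "f (sup a b) = inf (f a) (f b)"
proof (rule order.antisym)
  show "f (sup a b) \<le> inf (f a) (f b)"
    by (simp add: i_lattice_antimono[OF assms])
  have "a \<le> f (inf (f a) (f b))" and "b \<le> f (inf (f a) (f b))"
    using i_lattice_antimono[OF assms, of "inf (f a) (f b)" "f a"]
      i_lattice_antimono[OF assms, of "inf (f a) (f b)" "f b"]
    by (simp_all add: i_lattice_involutive[OF assms])
  then have "sup a b \<le> f (inf (f a) (f b))"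
    by simp
  then show "inf (f a) (f b) \<le> f (sup a b)"
    using i_lattice_antimono[OF assms] i_lattice_involutive[OF assms] by metis
qed

lemma i_lattice_inf:
  assumes "i_lattice f"
  shows "f (inf a b) = sup (f a) (f b)"
  using i_lattice_sup[OF assms, of "f a" "f b"] i_lattice_involutive[OF assms]
  by metis

lemma Con_vimage_dual_hom:
  fixes h :: "'a::lattice \<Rightarrow> 'b::lattice"
  assumes "\<theta> \<in> Con"
    and h_sup: "\<And>a b. h (sup a b) = inf (h a) (h b)"
    and h_inf: "\<And>a b. h (inf a b) = sup (h a) (h b)"
  shows "{(x, y). (h x, h y) \<in> \<theta>} \<in> Con"
proof -
  from assms(1) have equiv: "equiv UNIV \<theta>"
    and compat: "\<And>a b c d. (a, b) \<in> \<theta> \<Longrightarrow> (c, d) \<in> \<theta> \<Longrightarrow>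
      (sup a c, sup b d) \<in> \<theta> \<and> (inf a c, inf b d) \<in> \<theta>"
    unfolding Con_def by blast+
  have "equiv UNIV {(x, y). (h x, h y) \<in> \<theta>}"
    using equiv unfolding equiv_def refl_on_def sym_def trans_def by blast
  moreover have "(sup a c, sup b d) \<in> {(x, y). (h x, h y) \<in> \<theta>} \<and>
      (inf a c, inf b d) \<in> {(x, y). (h x, h y) \<in> \<theta>}"
    if "(a, b) \<in> {(x, y). (h x, h y) \<in> \<theta>}" and "(c, d) \<in> {(x, y). (h x, h y) \<in> \<theta>}"
    for a b c d
    using that compat by (simp add: h_sup h_inf)
  ultimately show ?thesis
    unfolding Con_def by blast
qed

lemma Con_vimage_i_lattice:
  assumes "i_lattice f" and "\<theta> \<in> Con"
  shows "{(x, y). (f x, f y) \<in> \<theta>} \<in> Con"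
  using Con_vimage_dual_hom[OF assms(2)] i_lattice_sup[OF assms(1)] i_lattice_inf[OF assms(1)]
  by blast

lemma vimage_involution_subset:
  assumes "\<And>x. g (g x) = x" and "{(x, y). (g x, g y) \<in> \<theta>} \<subseteq> \<theta>"
  shows "\<theta> \<subseteq> {(x, y). (g x, g y) \<in> \<theta>}"
proof clarify
  fix a b
  assume "(a, b) \<in> \<theta>"
  then have "(g a, g b) \<in> {(x, y). (g x, g y) \<in> \<theta>}"
    by (simp add: assms(1))
  with assms(2) show "(g a, g b) \<in> \<theta>"
    by blast
qed

theorem corollary4p7:
  fixes f :: "'a::lattice \<Rightarrow> 'a"
  assumes "i_lattice f"
    and "\<forall>\<theta>1\<in>(Con :: ('a \<times> 'a) set set). \<forall>\<theta>2\<in>Con. \<theta>1 \<subseteq> \<theta>2 \<or> \<theta>2 \<subseteq> \<theta>1"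
  shows "Con_I f = Con"
proof
  show "Con_I f \<subseteq> Con"
    unfolding Con_I_def by blast
  show "Con \<subseteq> Con_I f"
  proof
    fix \<theta> :: "('a \<times> 'a) set"
    assume "\<theta> \<in> Con"
    let ?\<theta>' = "{(x, y). (f x, f y) \<in> \<theta>}"
    have "?\<theta>' \<in> Con"
      using Con_vimage_i_lattice[OF assms(1) \<open>\<theta> \<in> Con\<close>] .
    then have "\<theta> \<subseteq> ?\<theta>' \<or> ?\<theta>' \<subseteq> \<theta>"
      using assms(2) \<open>\<theta> \<in> Con\<close> by simp
    moreover have "\<theta> \<subseteq> ?\<theta>'" if "?\<theta>' \<subseteq> \<theta>"
      using vimage_involution_subset i_lattice_involutive[OF assms(1)] that .
    ultimately have "\<theta> \<subseteq> ?\<theta>'"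
      by blast
    then show "\<theta> \<in> Con_I f"
      using \<open>\<theta> \<in> Con\<close> unfolding Con_I_def by blast
  qed
qed

end
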